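(* The $d\times(d-1)$ matrix $B=M^+\bigl((F'_p)^2\bigr)-M^+(F)\bigl(M^-(F)\bigr)^{-1}M^-\bigl((F'_p)^2\bigr)$ is expressed in terms of the coefficients $a_i$ alone (without their derivatives) and has maximal rank $d-1$ (at every point of $U$).
   Context: Let $d\ge 3$, let $U\subset\mathbb{C}^2$ be open with coordinates $(x,y)$, and let $F(x,y,p)=\sum_{i=0}^d a_i(x,y)p^{d-i}$ with $a_i$ holomorphic on $U$, $a_0\equiv1$, such that $F(x,y,p)=\prod_{i=1}^d(p-p_i(x,y))$ with holomorphic $p_i$ pairwise distinct at every point of $U$. A polynomial $P=\sum_{i=0}^k g_ip^i$ with holomorphic coefficients is identified with the column vector $(g_0,\dots,g_k)^T$. For such $P$ (of formal degree $\le k$) and an integer $h\ge 0$, $M(P)$ denotes the $(h+k+1)\times(h+1)$ matrix of multiplication by $P$ from polynomials of degree $\le h$ to polynomials of degree $\le h+k$: its entry in row $i$, column $j$ (indices starting at $0$) is $g_{i-j}$ if $0\le i-j\le k$ and $0$ otherwise. Here $M(F)$ is taken of size $(3d-3)\times(2d-3)$ (i.e. $h=2d-4$) and $M((F'_p)^2)$ of size $(3d-3)\times(d-1)$ (i.e. $h=d-2$). For a matrix $X$ with $3d-3$ rows, $X^+$ denotes the submatrix formed by its first $d$ rows and $X^-$ the submatrix formed by its last $2d-3$ rows; $M^-(F)$ is triangular with ones on the diagonal, hence invertible. *)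

theory Defs
  imports "HOL-Analysis.Analysis" "HOL-Computational_Algebra.Polynomial"
    "Jordan_Normal_Form.DL_Rank" "Jordan_Normal_Form.Gauss_Jordan_Elimination"
begin

text \<open>Holomorphic functions of two complex variables on an open set of C^2 = complex \<times> complex:
  continuous and holomorphic in each variable separately (equivalent to joint
  complex differentiability by Osgood's lemma).\<close>
definition holo2 :: "(complex \<times> complex) set \<Rightarrow> (complex \<times> complex \<Rightarrow> complex) \<Rightarrow> bool" where
  "holo2 U f \<longleftrightarrow> continuous_on U f \<and>
     (\<forall>x y. (x, y) \<in> U \<longrightarrow>
        (\<lambda>t. f (t, y)) field_differentiable at x \<and> (\<lambda>t. f (x, t)) field_differentiable at y)"

definition Fpoly :: "nat \<Rightarrow> (nat \<Rightarrow> complex) \<Rightarrow> complex poly" where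
  "Fpoly d c = (\<Sum>i\<le>d. monom (c i) (d - i))"

text \<open>Matrix of multiplication by P (formal degree \<le> k) from polynomials of degree \<le> h
  to polynomials of degree \<le> h + k; entry (i,j) is coeff P (i-j) if 0 \<le> i-j \<le> k.\<close>
definition Mmat :: "nat \<Rightarrow> nat \<Rightarrow> complex poly \<Rightarrow> complex mat" where
  "Mmat k h P = mat (h + k + 1) (h + 1)
     (\<lambda>(i, j). if j \<le> i \<and> i - j \<le> k then coeff P (i - j) else 0)"

definition upper :: "nat \<Rightarrow> complex mat \<Rightarrow> complex mat" where
  "upper d X = mat d (dim_col X) (\<lambda>(i, j). X $$ (i, j))"

definition lower :: "nat \<Rightarrow> complex mat \<Rightarrow> complex mat" where
  "lower d X = mat (2 * d - 3) (dim_col X) (\<lambda>(i, j). X $$ (i + d, j))"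

definition MF :: "nat \<Rightarrow> (nat \<Rightarrow> complex) \<Rightarrow> complex mat" where
  "MF d c = Mmat d (2 * d - 4) (Fpoly d c)"

definition MFp2 :: "nat \<Rightarrow> (nat \<Rightarrow> complex) \<Rightarrow> complex mat" where
  "MFp2 d c = Mmat (2 * d - 2) (d - 2) ((pderiv (Fpoly d c))\<^sup>2)"

definition Bmat :: "nat \<Rightarrow> (nat \<Rightarrow> complex) \<Rightarrow> complex mat" where
  "Bmat d c = upper d (MFp2 d c)
     - upper d (MF d c) * the (mat_inverse (lower d (MF d c))) * lower d (MFp2 d c)"

end

theory Submission
  imports Defs
begin

text \<open>Let \<open>v\<close> lie in the kernel of \<open>B\<close> and put \<open>s = (M\<^sup>-(F))\<^sup>-\<^sup>1 M\<^sup>-((F'\<^sub>p)\<^sup>2) v\<close>.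
  Then \<open>M((F'\<^sub>p)\<^sup>2) v\<close> and \<open>M(F) s\<close> agree in the first \<open>d\<close> rows (because \<open>B v = 0\<close>) and in the
  last \<open>2d-3\<close> rows (by the choice of \<open>s\<close>), i.e. \<open>(F'\<^sub>p)\<^sup>2 Q = F S\<close> for the polynomials \<open>Q\<close>, \<open>S\<close>
  with coefficient vectors \<open>v\<close>, \<open>s\<close>. Since the roots of \<open>F\<close> are simple, \<open>F'\<^sub>p\<close> does not vanish
  at them, so \<open>Q\<close>, of degree \<open>< d\<close>, has \<open>d\<close> roots and is zero. Thus \<open>B\<close> has trivial kernel.
  That \<open>B\<close> is well defined comes from \<open>M\<^sup>-(F)\<close> being upper triangular with diagonal \<open>a\<^sub>0 = 1\<close>.
  Only the values of the \<open>a\<^sub>i\<close> enter, so the statement is pointwise and holomorphy plays no role.\<close>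

lemma mult_mat_vec_unit_vec:
  "(A :: 'a :: semiring_1 mat) \<in> carrier_mat n nc \<Longrightarrow> i < nc \<Longrightarrow> A *\<^sub>v unit_vec nc i = col A i"
  by (intro eq_vecI) (auto simp: scalar_prod_right_unit[of i nc])

lemma rank_eq_dim_col_if_trivial_kernel:
  fixes A :: "'a :: field mat"
  assumes A: "A \<in> carrier_mat n nc"
    and ker: "\<And>v. v \<in> carrier_vec nc \<Longrightarrow> A *\<^sub>v v = 0\<^sub>v n \<Longrightarrow> v = 0\<^sub>v nc"
  shows "vec_space.rank n A = nc"
proof -
  have "distinct (cols A)"
  proof (subst distinct_conv_nth, intro allI impI notI)
    fix i j assume "i < length (cols A)" "j < length (cols A)" "i \<noteq> j" "cols A ! i = cols A ! j"
    then have i: "i < nc" and j: "j < nc" and "i \<noteq> j" and "col A i = col A j"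
      using A by auto
    let ?v = "unit_vec nc i - unit_vec nc j :: 'a vec"
    have "A *\<^sub>v ?v = col A i - col A j"
      using A i j by (simp add: mult_minus_distrib_mat_vec mult_mat_vec_unit_vec)
    with \<open>col A i = col A j\<close> have "?v = 0\<^sub>v nc"
      using A by (intro ker) auto
    then have "?v $ i = 0" using i by simp
    then show False using i j \<open>i \<noteq> j\<close> by simp
  qed
  moreover have "\<not> module.lin_dep class_ring (module_vec TYPE('a) n) (set (cols A))"
    using vec_space.lin_depE[OF A _ \<open>distinct (cols A)\<close>] ker by metis
  ultimately show ?thesis using vec_space.lin_indpt_full_rank[OF A] by blast
qed

lemma coeff_Poly_list_of_vec: "coeff (Poly (list_of_vec v)) i = (if i < dim_vec v then v $ i else 0)"
  by (simp add: nth_default_def)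

lemma degree_Poly_list_of_vec: "v \<in> carrier_vec (Suc h) \<Longrightarrow> degree (Poly (list_of_vec v)) \<le> h"
  by (rule degree_le) (simp add: nth_default_def)

lemma Mmat_carrier: "Mmat k h P \<in> carrier_mat (h + k + 1) (h + 1)"
  unfolding Mmat_def by simp

lemma Mmat_mult_vec:
  assumes P: "degree P \<le> k" and v: "v \<in> carrier_vec (h + 1)"
  shows "Mmat k h P *\<^sub>v v = vec (h + k + 1) (coeff (P * Poly (list_of_vec v)))"
proof (rule eq_vecI)
  fix i assume "i < dim_vec (vec (h + k + 1) (coeff (P * Poly (list_of_vec v))))"
  then have i: "i < h + k + 1" by simp
  have "coeff (P * Poly (list_of_vec v)) i =
      (\<Sum>j\<le>i. coeff (Poly (list_of_vec v)) j * coeff P (i - j))"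
    by (simp add: mult.commute[of P] coeff_mult)
  also have "\<dots> = (\<Sum>j\<in>{..i} \<inter> {..<h + 1}. v $ j * coeff P (i - j))"
    using v by (intro sum.mono_neutral_cong_right) (auto simp: nth_default_def)
  also have "\<dots> = (\<Sum>j<h + 1. (if j \<le> i \<and> i - j \<le> k then coeff P (i - j) else 0) * v $ j)"
    using P by (intro sum.mono_neutral_cong_left)
      (auto simp: mult.commute intro: coeff_eq_0 le_less_trans[OF P])
  also have "\<dots> = (Mmat k h P *\<^sub>v v) $ i"
    using i v by (simp add: Mmat_def mult_mat_vec_def scalar_prod_def atLeast0LessThan)
  finally show "(Mmat k h P *\<^sub>v v) $ i = vec (h + k + 1) (coeff (P * Poly (list_of_vec v))) $ i"
    using i by simp
qed (simp add: Mmat_def)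

lemma Mmat_mult_vec_eq_imp_poly_eq:
  assumes "degree P \<le> k" "degree P' \<le> k'" "h + k = h' + k'"
    and v: "v \<in> carrier_vec (h + 1)" and w: "w \<in> carrier_vec (h' + 1)"
    and eq: "Mmat k h P *\<^sub>v v = Mmat k' h' P' *\<^sub>v w"
  shows "P * Poly (list_of_vec v) = P' * Poly (list_of_vec w)"
proof (rule poly_eqI)
  fix i
  show "coeff (P * Poly (list_of_vec v)) i = coeff (P' * Poly (list_of_vec w)) i"
  proof (cases "i \<le> h + k")
    case True
    then have "coeff (P * Poly (list_of_vec v)) i = (Mmat k h P *\<^sub>v v) $ i"
      unfolding Mmat_mult_vec[OF assms(1) v] by simp
    also have "\<dots> = coeff (P' * Poly (list_of_vec w)) i"
      using True assms(3) unfolding eq Mmat_mult_vec[OF assms(2) w] by simp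
    finally show ?thesis .
  next
    case False
    have "degree (P * Poly (list_of_vec v)) \<le> h + k"
      using degree_mult_le[of P "Poly (list_of_vec v)"] degree_Poly_list_of_vec[OF v[simplified]]
        assms(1) by linarith
    moreover have "degree (P' * Poly (list_of_vec w)) \<le> h + k"
      using degree_mult_le[of P' "Poly (list_of_vec w)"] degree_Poly_list_of_vec[OF w[simplified]]
        assms(2,3) by linarith
    ultimately show ?thesis using False by (simp add: coeff_eq_0)
  qed
qed

lemma upper_carrier: "A \<in> carrier_mat m n \<Longrightarrow> upper d A \<in> carrier_mat d n"
  unfolding upper_def by auto

lemma lower_carrier: "A \<in> carrier_mat m n \<Longrightarrow> lower d A \<in> carrier_mat (2 * d - 3) n"
  unfolding lower_def by auto

lemma index_upper_mult_mat_vec: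
  "A \<in> carrier_mat m n \<Longrightarrow> v \<in> carrier_vec n \<Longrightarrow> i < d \<Longrightarrow> d \<le> m \<Longrightarrow>
    (upper d A *\<^sub>v v) $ i = (A *\<^sub>v v) $ i"
  by (simp add: upper_def mult_mat_vec_def scalar_prod_def row_def)

lemma index_lower_mult_mat_vec:
  "A \<in> carrier_mat m n \<Longrightarrow> v \<in> carrier_vec n \<Longrightarrow> i < 2 * d - 3 \<Longrightarrow> d + (2 * d - 3) \<le> m \<Longrightarrow>
    (lower d A *\<^sub>v v) $ i = (A *\<^sub>v v) $ (i + d)"
  by (simp add: lower_def mult_mat_vec_def scalar_prod_def row_def)

lemma Schur_complement_kernel:
  assumes A: "A \<in> carrier_mat (d + (2 * d - 3)) n" and C: "C \<in> carrier_mat (d + (2 * d - 3)) q"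
    and X: "X \<in> carrier_mat n (2 * d - 3)" and AX: "lower d A * X = 1\<^sub>m (2 * d - 3)"
    and v: "v \<in> carrier_vec q"
    and ker: "(upper d C - upper d A * X * lower d C) *\<^sub>v v = 0\<^sub>v d"
  shows "C *\<^sub>v v = A *\<^sub>v (X *\<^sub>v (lower d C *\<^sub>v v))"
proof -
  define s where "s = X *\<^sub>v (lower d C *\<^sub>v v)"
  have s: "s \<in> carrier_vec n"
    unfolding s_def using X lower_carrier[where d = d, OF C] v by simp
  have "(upper d C - upper d A * X * lower d C) *\<^sub>v v = upper d C *\<^sub>v v - upper d A *\<^sub>v s"
    unfolding s_def using upper_carrier[where d = d, OF A] upper_carrier[where d = d, OF C]
      lower_carrier[where d = d, OF C] X v
    by (subst minus_mult_distrib_mat_vec, (auto)[3], subst assoc_mult_mat_vec[of _ d "2 * d - 3"])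
      (auto simp: assoc_mult_mat_vec[of _ d n])
  then have "(upper d C *\<^sub>v v) $ i = (upper d A *\<^sub>v s) $ i" if "i < d" for i
    using arg_cong[OF ker, of "\<lambda>x. x $ i"] that upper_carrier[where d = d, OF A] s by simp
  then have upper_eq: "(C *\<^sub>v v) $ i = (A *\<^sub>v s) $ i" if "i < d" for i
    using that A C v s by (simp add: index_upper_mult_mat_vec)
  have "lower d A *\<^sub>v s = (lower d A * X) *\<^sub>v (lower d C *\<^sub>v v)"
    unfolding s_def using lower_carrier[where d = d, OF A] lower_carrier[where d = d, OF C] X v
    by simp
  then have "lower d A *\<^sub>v s = lower d C *\<^sub>v v"
    unfolding AX using lower_carrier[where d = d, OF C] v by simp
  then have lower_eq: "(C *\<^sub>v v) $ (i + d) = (A *\<^sub>v s) $ (i + d)" if "i < 2 * d - 3" for i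
    using arg_cong[of _ _ "\<lambda>x. x $ i"] that A C v s by (metis index_lower_mult_mat_vec order_refl)
  have "C *\<^sub>v v = A *\<^sub>v s"
  proof (rule eq_vecI)
    fix i assume "i < dim_vec (A *\<^sub>v s)"
    then have "i < d + (2 * d - 3)" using A by simp
    then show "(C *\<^sub>v v) $ i = (A *\<^sub>v s) $ i"
      using upper_eq lower_eq[of "i - d"] by (cases "i < d") auto
  qed (use A C in simp)
  then show ?thesis unfolding s_def .
qed

lemma poly_pderiv_prod_linear_neq_0:
  fixes r :: "'b \<Rightarrow> 'a :: idom"
  assumes "finite S" "inj_on r S" "i \<in> S"
  shows "poly (pderiv (\<Prod>j\<in>S. [:- r j, 1:])) (r i) \<noteq> 0"
proof -
  let ?H = "\<Prod>j\<in>S - {i}. [:- r j, 1:]"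
  have "poly (pderiv (\<Prod>j\<in>S. [:- r j, 1:])) (r i) = poly (pderiv ([:- r i, 1:] * ?H)) (r i)"
    using assms by (simp add: prod.remove)
  also have "\<dots> = poly ?H (r i)"
    by (simp only: pderiv_mult) (simp add: pderiv_pCons)
  also have "\<dots> = (\<Prod>j\<in>S - {i}. r i - r j)"
    by (simp add: poly_prod)
  also have "\<dots> \<noteq> 0"
    using assms by (auto simp: prod_zero_iff inj_on_eq_iff)
  finally show ?thesis .
qed

lemma square_pderiv_mult_eq_imp_eq_0:
  fixes r :: "'b \<Rightarrow> 'a :: idom"
  assumes S: "finite S" and r: "inj_on r S" and F: "F = (\<Prod>j\<in>S. [:- r j, 1:])"
    and eq: "(pderiv F)\<^sup>2 * Q = F * R" and deg: "degree Q < card S"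
  shows "Q = 0"
proof (rule poly_eqI_degree[of "r ` S"])
  fix x assume "x \<in> r ` S"
  then obtain i where i: "i \<in> S" and x: "x = r i" by auto
  have "poly F x = 0" unfolding F x poly_prod using S i by (intro prod_zero) auto
  then have "poly ((pderiv F)\<^sup>2 * Q) x = 0" using eq by simp
  moreover have "poly (pderiv F) x \<noteq> 0"
    unfolding F x using S r i by (rule poly_pderiv_prod_linear_neq_0)
  ultimately show "poly Q x = poly 0 x" by simp
qed (use deg card_image[OF r] in auto)

lemma degree_Fpoly: "degree (Fpoly d c) \<le> d"
  unfolding Fpoly_def by (rule degree_sum_le) (auto intro: order.trans[OF degree_monom_le])

lemma coeff_Fpoly_degree: "coeff (Fpoly d c) d = c 0"
proof -
  have "coeff (Fpoly d c) d = (\<Sum>i\<le>d. if i = 0 then c i else 0)"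
    unfolding Fpoly_def coeff_sum by (intro sum.cong) (auto simp: coeff_monom)
  then show ?thesis by simp
qed

lemma poly_Fpoly: "poly (Fpoly d c) p = (\<Sum>i\<le>d. c i * p ^ (d - i))"
  unfolding Fpoly_def by (simp add: poly_sum poly_monom)

lemma MF_carrier:
  assumes "d \<ge> 2" shows "MF d c \<in> carrier_mat (d + (2 * d - 3)) (2 * d - 3)"
proof -
  have "2 * d - 4 + d + 1 = d + (2 * d - 3)" "2 * d - 4 + 1 = 2 * d - 3" using assms by auto
  then show ?thesis using Mmat_carrier[of d "2 * d - 4" "Fpoly d c"] unfolding MF_def by simp
qed

lemma MFp2_carrier:
  assumes "d \<ge> 2" shows "MFp2 d c \<in> carrier_mat (d + (2 * d - 3)) (d - 1)"
proof -
  have "d - 2 + (2 * d - 2) + 1 = d + (2 * d - 3)" "d - 2 + 1 = d - 1" using assms by auto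
  then show ?thesis
    using Mmat_carrier[of "2 * d - 2" "d - 2" "(pderiv (Fpoly d c))\<^sup>2"] unfolding MFp2_def by simp
qed

lemma index_lower_MF:
  assumes "d \<ge> 2" "i < 2 * d - 3" "j < 2 * d - 3"
  shows "lower d (MF d c) $$ (i, j) =
    (if j \<le> i + d \<and> i + d - j \<le> d then coeff (Fpoly d c) (i + d - j) else 0)"
  using assms MF_carrier[of d c] by (simp add: lower_def MF_def Mmat_def)

lemma det_lower_MF:
  assumes d: "d \<ge> 2"
  shows "det (lower d (MF d c)) = c 0 ^ (2 * d - 3)"
proof -
  have L: "lower d (MF d c) \<in> carrier_mat (2 * d - 3) (2 * d - 3)"
    using lower_carrier[OF MF_carrier[OF d]] .
  have "upper_triangular (lower d (MF d c))"
    using L by (auto simp: upper_triangular_def index_lower_MF[OF d])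
  then have "det (lower d (MF d c)) = (\<Prod>i = 0..<2 * d - 3. lower d (MF d c) $$ (i, i))"
    using L by (simp add: det_upper_triangular prod_list_diag_prod)
  also have "\<dots> = (\<Prod>i = 0..<2 * d - 3. c 0)"
    by (intro prod.cong) (simp_all add: index_lower_MF[OF d] coeff_Fpoly_degree)
  finally show ?thesis by simp
qed

lemma mat_inverse_lower_MF:
  assumes "d \<ge> 2" "c 0 \<noteq> 0"
  obtains X where "mat_inverse (lower d (MF d c)) = Some X"
    and "X \<in> carrier_mat (2 * d - 3) (2 * d - 3)" and "lower d (MF d c) * X = 1\<^sub>m (2 * d - 3)"
proof -
  have L: "lower d (MF d c) \<in> carrier_mat (2 * d - 3) (2 * d - 3)"
    using lower_carrier[OF MF_carrier[OF assms(1)]] .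
  have "lower d (MF d c) \<in> Units (ring_mat TYPE(complex) (2 * d - 3) ())"
    using assms by (intro det_non_zero_imp_unit[OF L]) (simp add: det_lower_MF)
  then obtain X where X: "mat_inverse (lower d (MF d c)) = Some X"
    using mat_inverse(1)[OF L, of "()"] by (cases "mat_inverse (lower d (MF d c))") auto
  with mat_inverse(2)[OF L X] that show thesis by auto
qed

lemma degree_square_pderiv_Fpoly: "degree ((pderiv (Fpoly d c))\<^sup>2) \<le> 2 * d - 2"
proof -
  have "degree ((pderiv (Fpoly d c))\<^sup>2) \<le> 2 * degree (pderiv (Fpoly d c))"
    using degree_power_le[of "pderiv (Fpoly d c)" 2] by (simp add: mult.commute)
  then show ?thesis using degree_Fpoly[of d c] by (simp add: degree_pderiv)
qed

lemma Bmat_carrier_rank: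
  assumes d: "d \<ge> 3" and c0: "c 0 = 1" and r: "inj_on r {1..d}"
    and F: "Fpoly d c = (\<Prod>j\<in>{1..d}. [:- r j, 1:])"
  shows "Bmat d c \<in> carrier_mat d (d - 1)" and "vec_space.rank d (Bmat d c) = d - 1"
proof -
  have MF: "MF d c \<in> carrier_mat (d + (2 * d - 3)) (2 * d - 3)"
    and MG: "MFp2 d c \<in> carrier_mat (d + (2 * d - 3)) (d - 1)"
    using d by (intro MF_carrier MFp2_carrier; simp)+
  obtain X where inv: "mat_inverse (lower d (MF d c)) = Some X"
    and X: "X \<in> carrier_mat (2 * d - 3) (2 * d - 3)"
    and LX: "lower d (MF d c) * X = 1\<^sub>m (2 * d - 3)"
    using mat_inverse_lower_MF[of d c] d c0 by auto
  have B: "Bmat d c = upper d (MFp2 d c) - upper d (MF d c) * X * lower d (MFp2 d c)"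
    unfolding Bmat_def inv by simp
  show carrier: "Bmat d c \<in> carrier_mat d (d - 1)"
    unfolding B using upper_carrier[where d = d, OF MF] upper_carrier[where d = d, OF MG]
      lower_carrier[where d = d, OF MG] X by (intro minus_carrier_mat mult_carrier_mat)
  have "v = 0\<^sub>v (d - 1)" if v: "v \<in> carrier_vec (d - 1)" and Bv: "Bmat d c *\<^sub>v v = 0\<^sub>v d" for v
  proof -
    define s where "s = X *\<^sub>v (lower d (MFp2 d c) *\<^sub>v v)"
    have s: "s \<in> carrier_vec (2 * d - 3)"
      unfolding s_def using X lower_carrier[where d = d, OF MG] v by simp
    have "d - 2 + 1 = d - 1" "2 * d - 4 + 1 = 2 * d - 3" using d by auto
    then have v': "v \<in> carrier_vec (d - 2 + 1)" and s': "s \<in> carrier_vec (2 * d - 4 + 1)"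
      using v s by simp_all
    have "MFp2 d c *\<^sub>v v = MF d c *\<^sub>v s"
      unfolding s_def using Bv by (intro Schur_complement_kernel[OF MF MG X LX v]) (simp add: B)
    then have "(pderiv (Fpoly d c))\<^sup>2 * Poly (list_of_vec v) = Fpoly d c * Poly (list_of_vec s)"
      unfolding MFp2_def MF_def using d degree_square_pderiv_Fpoly[of d c] degree_Fpoly[of d c]
      by (intro Mmat_mult_vec_eq_imp_poly_eq[OF _ _ _ v' s']) auto
    moreover have "degree (Poly (list_of_vec v)) < card {1..d}"
      using degree_Poly_list_of_vec[OF v'[simplified]] d by simp
    ultimately have Q: "Poly (list_of_vec v) = 0"
      by (intro square_pderiv_mult_eq_imp_eq_0[OF _ r F]) auto
    show ?thesis
    proof (rule eq_vecI)
      fix i assume "i < dim_vec (0\<^sub>v (d - 1))"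
      then show "v $ i = 0\<^sub>v (d - 1) $ i"
        using arg_cong[OF Q, of "\<lambda>p. coeff p i"] v
        by (simp add: coeff_Poly_list_of_vec del: coeff_Poly_eq)
    qed (use v in simp)
  qed
  then show "vec_space.rank d (Bmat d c) = d - 1"
    by (rule rank_eq_dim_col_if_trivial_kernel[OF carrier])
qed

theorem lemma2:
  fixes d :: nat and U :: "(complex \<times> complex) set"
    and a :: "nat \<Rightarrow> complex \<times> complex \<Rightarrow> complex"
    and r :: "nat \<Rightarrow> complex \<times> complex \<Rightarrow> complex"
  assumes d: "d \<ge> 3"
    and U: "open U"
    and holo_a: "\<And>i. i \<le> d \<Longrightarrow> holo2 U (a i)"
    and a0: "\<And>z. z \<in> U \<Longrightarrow> a 0 z = 1"
    and holo_r: "\<And>i. i \<in> {1..d} \<Longrightarrow> holo2 U (r i)"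
    and distinct: "\<And>z i j. z \<in> U \<Longrightarrow> i \<in> {1..d} \<Longrightarrow> j \<in> {1..d} \<Longrightarrow> i \<noteq> j \<Longrightarrow> r i z \<noteq> r j z"
    and factor: "\<And>z p. z \<in> U \<Longrightarrow>
       (\<Sum>i\<le>d. a i z * p ^ (d - i)) = (\<Prod>i\<in>{1..d}. p - r i z)"
  shows "\<forall>z\<in>U. dim_row (Bmat d (\<lambda>i. a i z)) = d
              \<and> dim_col (Bmat d (\<lambda>i. a i z)) = d - 1
              \<and> vec_space.rank d (Bmat d (\<lambda>i. a i z)) = d - 1"
proof
  fix z assume z: "z \<in> U"
  have "Fpoly d (\<lambda>i. a i z) = (\<Prod>j\<in>{1..d}. [:- r j z, 1:])"
    by (rule poly_ext) (simp add: poly_Fpoly poly_prod factor[OF z])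
  moreover have "inj_on (\<lambda>j. r j z) {1..d}"
    by (rule inj_onI) (meson distinct[OF z])
  ultimately show "dim_row (Bmat d (\<lambda>i. a i z)) = d \<and> dim_col (Bmat d (\<lambda>i. a i z)) = d - 1
              \<and> vec_space.rank d (Bmat d (\<lambda>i. a i z)) = d - 1"
    using Bmat_carrier_rank[of d "\<lambda>i. a i z" "\<lambda>j. r j z"] d a0[OF z] by auto
qed

end
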